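(* Let $P$ be a homogeneous normalized random measure with independent increments with Lévy intensity $\rho(ds)\,aH(dx)$ (as in the context), and assume $\tilde{\tau}_2=\int_1^\infty s^2\rho(ds)<\infty$. Then for any $A\in\mathcal{X}$, $$\mathbb{E}[P(A)]=H(A),\qquad \mathrm{Var}(P(A))=H(A)(1-H(A))\,\mathcal{I}_a,$$ where $$\mathcal{I}_a=a\int_0^\infty\lambda\exp\Big\{-a\int_0^\infty(1-e^{-\lambda s})\rho(ds)\Big\}\int_0^\infty s^2e^{-\lambda s}\rho(ds)\,d\lambda.$$ Moreover, $\mathcal{I}_a=O(1/a)$ as $a\to\infty$.
   Context: $(\mathbb{X},\mathcal{X})$ is a complete separable metric space with its Borel $\sigma$-algebra. $\rho$ is a measure on $(0,\infty)$ with $\int_0^\infty\min(s,1)\rho(ds)<\infty$ and $\rho((0,\infty))=\infty$; $H$ is a non-atomic probability measure on $\mathbb{X}$ and $a>0$ (the concentration parameter). $\tilde{\mu}_a$ is the completely random measure $\tilde{\mu}_a(A)=\int_0^\infty\int_A s\,\tilde N(ds,dx)$, where $\tilde N$ is a Poisson random measure on $(0,\infty)\times\mathbb{X}$ with mean measure $\rho(ds)\,aH(dx)$; equivalently $\mathbb{E}[e^{-\int_A h\,d\tilde\mu_a}]=\exp\{-a\int_0^\infty\int_A(1-e^{-sh(x)})\rho(ds)H(dx)\}$. The hNRMI is $P(\cdot)=\tilde{\mu}_a(\cdot)/\tilde{\mu}_a(\mathbb{X})$. *)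

theory Defs
  imports "HOL-Probability.Probability"
begin

definition neg_exp_enn :: "ennreal \<Rightarrow> real" where
  "neg_exp_enn L = (if L = \<infinity> then 0 else exp (- enn2real L))"

definition hnrmi :: "('w \<Rightarrow> 'x measure) \<Rightarrow> 'w \<Rightarrow> 'x set \<Rightarrow> real" where
  "hnrmi \<mu> w A = enn2real (emeasure (\<mu> w) A) / enn2real (emeasure (\<mu> w) (space (\<mu> w)))"

definition Ia_integrand :: "real measure \<Rightarrow> real \<Rightarrow> real \<Rightarrow> real" where
  "Ia_integrand \<rho> a l =
     l * exp (- a * (\<integral>s. (1 - exp (- l * s)) \<partial>\<rho>)) * (\<integral>s. s\<^sup>2 * exp (- l * s) \<partial>\<rho>)"

definition Ia :: "real measure \<Rightarrow> real \<Rightarrow> real" where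
  "Ia \<rho> a = a * (LINT l:{0<..}|lborel. Ia_integrand \<rho> a l)"

end

theory Submission
  imports Defs
begin

text \<open>Write T and Y for the masses of \<mu> on the whole space and on A, and psi for the Laplace
  exponent of \<rho>, whose derivatives are, up to sign, the functions tau k. Since 1/T and 1/T^2
  are the integrals of exp(-\<lambda>T) and \<lambda> exp(-\<lambda>T) over \<lambda> > 0, Tonelli turns E[P(A)] and
  E[P(A)^2] into \<lambda>-integrals of E[Y exp(-\<lambda>T)] and E[Y^2 exp(-\<lambda>T)]. Up to sign these are the
  first two u-derivatives at u = 0 of the joint Laplace transform
    E[exp(-\<lambda>T - uY)] = exp(-a (psi \<lambda> + H(A) (psi (\<lambda> + u) - psi \<lambda>))),
  so E[P(A)] = H(A) c1 and E[P(A)^2] = H(A)^2 c2 + H(A) I_a with constants c1, c2 that do not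
  depend on A. Taking A to be the whole space, where P(A) = 1, gives c1 = 1 and c2 = 1 - I_a.
  That T is a.s. finite and positive follows from psi(0+) = 0 and psi(\<infinity>) = \<infinity>, the latter
  because \<rho> has infinite mass.

  For I_a = O(1/a) split the \<lambda>-integral at 1. On (0,1), psi \<lambda> \<ge> \<lambda> psi 1 bounds the integrand
  by tau 2 0 \<lambda> exp(-a \<lambda> psi 1), whose integral is O(1/a^2). On [1,\<infinity>) the integrand at a is at
  most exp(-(a-1) psi 1) times the integrand at 1, and \<lambda> tau 2 \<lambda> \<le> 2 tau 1 (\<lambda>/2) bounds the
  latter by 4 times the derivative of -exp(-psi(\<lambda>/2)), whose integral is at most 4.\<close>

lemma integral_dominated_convergence_at:
  fixes f :: "real \<Rightarrow> 'a \<Rightarrow> real"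
  assumes meas: "\<And>x. f x \<in> borel_measurable M" and "L \<in> borel_measurable M"
    and "integrable M g"
    and bound: "\<forall>\<^sub>F x in at l. AE s in M. \<bar>f x s\<bar> \<le> g s"
    and lim: "AE s in M. ((\<lambda>x. f x s) \<longlongrightarrow> L s) (at l)"
  shows "((\<lambda>x. \<integral>s. f x s \<partial>M) \<longlongrightarrow> (\<integral>s. L s \<partial>M)) (at l)"
  unfolding tendsto_at_iff_sequentially[where s=UNIV]
proof (intro allI impI)
  fix X :: "nat \<Rightarrow> real" assume "\<forall>i. X i \<in> UNIV - {l}" and "X \<longlonglongrightarrow> l"
  then have X: "filterlim X (at l) sequentially"
    by (auto simp: filterlim_at)
  from filterlim_iff[THEN iffD1, OF X, rule_format, OF bound]
  obtain N where N: "\<And>n. N \<le> n \<Longrightarrow> AE s in M. \<bar>f (X n) s\<bar> \<le> g s"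
    by (auto simp: eventually_sequentially)
  have "(\<lambda>n. \<integral>s. f (X (n + N)) s \<partial>M) \<longlonglongrightarrow> (\<integral>s. L s \<partial>M)"
  proof (rule integral_dominated_convergence[where w=g])
    show "AE s in M. norm (f (X (n + N)) s) \<le> g s" for n
      using N[of "n + N"] by auto
    show "AE s in M. (\<lambda>n. f (X (n + N)) s) \<longlonglongrightarrow> L s"
      using lim by eventually_elim
        (intro LIMSEQ_ignore_initial_segment filterlim_compose[OF _ X])
  qed (use assms in auto)
  then show "((\<lambda>x. \<integral>s. f x s \<partial>M) \<circ> X) \<longlonglongrightarrow> (\<integral>s. L s \<partial>M)"
    unfolding o_def by (rule LIMSEQ_offset)
qed

lemma difference_quotient_eq_deriv:
  fixes f f' :: "real \<Rightarrow> real"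
  assumes "\<forall>x\<in>{c<..<d}. DERIV f x :> f' x" and "y \<in> {c<..<d}" "l \<in> {c<..<d}" "y \<noteq> l"
  obtains z where "z \<in> {c<..<d}" "(f y - f l) / (y - l) = f' z"
proof -
  obtain z where z: "min y l < z" "z < max y l"
    and mvt: "f (max y l) - f (min y l) = (max y l - min y l) * f' z"
    using MVT2[of "min y l" "max y l" f f'] assms by (cases "y < l") (auto simp: min_def max_def)
  have "z \<in> {c<..<d}"
    using z assms by (auto simp: min_def max_def split: if_splits)
  moreover have "(f y - f l) / (y - l) = f' z"
    using mvt assms by (cases "y < l") (auto simp: field_simps min_def max_def)
  ultimately show ?thesis
    by (rule that)
qed

lemma DERIV_integral_dominated:
  fixes f f' :: "real \<Rightarrow> 'a \<Rightarrow> real"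
  assumes meas: "\<And>x. f x \<in> borel_measurable M" and "f' l \<in> borel_measurable M"
    and int: "\<And>x. x \<in> {c<..<d} \<Longrightarrow> integrable M (f x)"
    and l: "l \<in> {c<..<d}" and "integrable M g"
    and der: "AE s in M. \<forall>x\<in>{c<..<d}. DERIV (\<lambda>x. f x s) x :> f' x s"
    and bound: "AE s in M. \<forall>x\<in>{c<..<d}. \<bar>f' x s\<bar> \<le> g s"
  shows "DERIV (\<lambda>x. \<integral>s. f x s \<partial>M) l :> (\<integral>s. f' l s \<partial>M)"
  unfolding has_field_derivative_iff
proof -
  have near: "\<forall>\<^sub>F y in at l. y \<in> {c<..<d} \<and> y \<noteq> l"
    using l eventually_at_in_open[of "{c<..<d}" l] by simp
  have eq: "\<forall>\<^sub>F y in at l. (\<integral>s. (f y s - f l s) / (y - l) \<partial>M) =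
      ((\<integral>s. f y s \<partial>M) - (\<integral>s. f l s \<partial>M)) / (y - l)"
    using near by eventually_elim (use int l in auto)
  have "((\<lambda>y. \<integral>s. (f y s - f l s) / (y - l) \<partial>M) \<longlongrightarrow> (\<integral>s. f' l s \<partial>M)) (at l)"
  proof (rule integral_dominated_convergence_at[where g=g])
    show "\<forall>\<^sub>F y in at l. AE s in M. \<bar>(f y s - f l s) / (y - l)\<bar> \<le> g s"
      using near
    proof eventually_elim
      case (elim y)
      note y = elim
      show ?case using der bound
      proof eventually_elim
        case (elim s)
        then obtain z where "z \<in> {c<..<d}" "(f y s - f l s) / (y - l) = f' z s"
          using difference_quotient_eq_deriv[of c d "\<lambda>x. f x s" "\<lambda>x. f' x s" y l] y l by blast
        then show ?case using elim by auto
      qed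
    qed
    show "AE s in M. ((\<lambda>y. (f y s - f l s) / (y - l)) \<longlongrightarrow> f' l s) (at l)"
      using der by eventually_elim (use l in \<open>auto simp: has_field_derivative_iff\<close>)
  qed (use assms in auto)
  then show "((\<lambda>y. ((\<integral>s. f y s \<partial>M) - (\<integral>s. f l s \<partial>M)) / (y - l)) \<longlongrightarrow> (\<integral>s. f' l s \<partial>M)) (at l)"
    by (rule Lim_transform_eventually[OF _ eq])
qed

lemma nn_integral_power_times_exp:
  fixes t c :: real assumes t: "t > 0" and c: "c \<ge> 0"
  shows "(\<integral>\<^sup>+x. ennreal (indicator {0<..} x * (c * x^k * exp (- x * t))) \<partial>lborel) =
    ennreal (c * fact k / t^(k+1))"
proof -
  have "(\<integral>\<^sup>+x. ennreal (indicator {0<..} x * (c * x^k * exp (- x * t))) \<partial>lborel) =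
      (\<integral>\<^sup>+x. ennreal (c / t) * ennreal (erlang_density 0 t x * x^k) \<partial>lborel)"
    by (intro nn_integral_cong_AE, use AE_lborel_singleton[of 0] in eventually_elim)
      (use t c in \<open>auto simp: erlang_density_def ennreal_mult'[symmetric] mult_ac split: split_indicator\<close>)
  also have "\<dots> = ennreal (c / t) * ennreal (fact k / t^k)"
    using t by (simp add: nn_integral_cmult nn_integral_erlang_ith_moment)
  finally show ?thesis
    using t c by (simp add: ennreal_mult'[symmetric])
qed

lemma power_le_exp_scaled:
  fixes x :: real assumes "x \<ge> 0" "k > 0"
  shows "x^k \<le> real k ^ k * exp x"
proof -
  have "(x / real k)^k \<le> (1 + x / real k)^k"
    using assms by (intro power_mono) auto
  also have "\<dots> \<le> exp x"
    using assms by (intro exp_ge_one_plus_x_over_n_power_n) auto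
  finally show ?thesis using assms by (simp add: power_divide field_simps)
qed

lemma exp_neg_le_four_div_square:
  fixes x :: real assumes "x > 0"
  shows "exp (- x) \<le> 4 / x^2"
  using power_le_exp_scaled[of x 2] assms by (simp add: exp_minus field_simps)

lemma power_times_exp_le_min:
  fixes l s :: real assumes l: "l > 0" and s: "s > 0" and k: "k > 0"
  shows "s^k * exp (- l * s) \<le> ((real k / l)^k + 1) * min s 1"
proof (cases "s \<le> 1")
  case True
  have "s^k * exp (- l * s) \<le> s * 1"
    using True s k l by (intro mult_mono) (auto simp: power_decreasing[of 1 k s, simplified])
  also have "\<dots> \<le> ((real k / l)^k + 1) * min s 1"
    using True s l by (simp add: distrib_right)
  finally show ?thesis .
next
  case False
  have "s^k = (l * s)^k / l^k" using l by (simp add: power_mult_distrib)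
  also have "\<dots> \<le> (real k ^ k * exp (l * s)) / l^k"
    by (rule divide_right_mono) (use power_le_exp_scaled[of "l * s" k] l s k in auto)
  finally have "s^k * exp (- l * s) \<le> (real k / l)^k * exp (l * s) * exp (- l * s)"
    by (intro mult_right_mono) (auto simp: power_divide)
  also have "\<dots> = (real k / l)^k" by (simp add: mult.assoc flip: exp_add)
  finally show ?thesis using False by simp
qed

lemma power_times_exp_le_min_uniform:
  fixes l s x :: real assumes "l > 0" "s > 0" "k > 0" "x > l/2"
  shows "\<bar>s^k * exp (- x * s)\<bar> \<le> ((real k / (l/2))^k + 1) * min s 1"
proof -
  have "s^k * exp (- x * s) \<le> s^k * exp (- (l/2) * s)"
    using assms by (intro mult_left_mono) auto
  also have "\<dots> \<le> ((real k / (l/2))^k + 1) * min s 1"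
    using power_times_exp_le_min[of "l/2" s k] assms by simp
  finally show ?thesis using assms by simp
qed

lemma one_minus_exp_div_antimono:
  fixes u v z :: real assumes "0 < u" "u \<le> v" "0 \<le> z"
  shows "(1 - exp (- v * z)) / v \<le> (1 - exp (- u * z)) / u"
proof -
  define t where "t = u / v"
  have t: "0 \<le> t" "t \<le> 1" using assms unfolding t_def by auto
  have convex: "exp ((1 - t) *\<^sub>R 0 + t *\<^sub>R (- v * z)) \<le> (1 - t) * exp 0 + t * exp (- v * z)"
    by (rule convex_onD[OF exp_convex]) (use t in auto)
  have combination: "(1 - t) *\<^sub>R (0::real) + t *\<^sub>R (- v * z) = - u * z"
    unfolding t_def using assms by simp
  from convex have "exp (- u * z) \<le> 1 - t + t * exp (- v * z)"
    unfolding combination by simp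
  then have "t * (1 - exp (- v * z)) \<le> 1 - exp (- u * z)"
    by (simp add: algebra_simps)
  then show ?thesis
    unfolding t_def using assms by (simp add: field_simps)
qed

lemma DERIV_imp_difference_quotients_LIMSEQ:
  fixes f :: "real \<Rightarrow> real"
  assumes "DERIV f 0 :> D"
  shows "(\<lambda>n. (f (inverse (real (Suc n))) - f 0) / inverse (real (Suc n))) \<longlonglongrightarrow> D"
proof -
  have "((\<lambda>v. (f v - f 0) / v) \<longlongrightarrow> D) (at 0)"
    using assms unfolding has_field_derivative_iff by simp
  moreover have "filterlim (\<lambda>n. inverse (real (Suc n))) (at 0) sequentially"
    by (rule filterlim_atI[OF LIMSEQ_inverse_real_of_nat]) auto
  ultimately show ?thesis by (rule filterlim_compose)
qed

text \<open>By convexity of \<open>exp\<close> the difference quotients increase with \<open>n\<close>, so this is monotone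
  convergence and needs no integrability of \<open>Z * W\<close>.\<close>

lemma nn_integral_difference_quotients_LIMSEQ:
  fixes Z W :: "'a \<Rightarrow> real"
  assumes "\<And>w. Z w \<ge> 0" "\<And>w. W w \<ge> 0" and [measurable]: "Z \<in> borel_measurable M" "W \<in> borel_measurable M"
  shows "(\<lambda>n. \<integral>\<^sup>+ w. ennreal ((1 - exp (- inverse (real (Suc n)) * Z w)) / inverse (real (Suc n)) * W w) \<partial>M)
    \<longlonglongrightarrow> (\<integral>\<^sup>+ w. ennreal (Z w * W w) \<partial>M)"
proof (rule nn_integral_LIMSEQ)
  let ?v = "\<lambda>n. inverse (real (Suc n))"
  show "incseq (\<lambda>n w. ennreal ((1 - exp (- ?v n * Z w)) / ?v n * W w))"
  proof (intro incseq_SucI le_funI ennreal_leI mult_right_mono)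
    show "(1 - exp (- ?v n * Z w)) / ?v n \<le> (1 - exp (- ?v (Suc n) * Z w)) / ?v (Suc n)" for n w
      by (rule one_minus_exp_div_antimono) (auto simp: assms field_simps)
  qed (rule assms)
  show "(\<lambda>n. ennreal ((1 - exp (- ?v n * Z w)) / ?v n * W w)) \<longlonglongrightarrow> ennreal (Z w * W w)" for w
  proof (intro tendsto_ennrealI tendsto_mult tendsto_const)
    have "DERIV (\<lambda>v. 1 - exp (- v * Z w)) 0 :> Z w"
      by (auto intro!: derivative_eq_intros)
    from DERIV_imp_difference_quotients_LIMSEQ[OF this]
    show "(\<lambda>n. (1 - exp (- ?v n * Z w)) / ?v n) \<longlonglongrightarrow> Z w" by simp
  qed
qed measurable

lemma nn_integral_eq_minus_Laplace_deriv:
  fixes Z W :: "'a \<Rightarrow> real"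
  assumes [measurable]: "Z \<in> borel_measurable M" "W \<in> borel_measurable M"
    and Z_nonneg: "\<And>w. Z w \<ge> 0" and W_nonneg: "\<And>w. W w \<ge> 0"
    and "integrable M W"
    and Laplace: "\<And>v. v \<ge> 0 \<Longrightarrow> (\<integral>w. W w * exp (- v * Z w) \<partial>M) = \<Phi> v"
    and deriv: "DERIV \<Phi> 0 :> - D"
  shows "(\<integral>\<^sup>+ w. ennreal (Z w * W w) \<partial>M) = ennreal D"
proof -
  let ?v = "\<lambda>n. inverse (real (Suc n))"
  let ?q = "\<lambda>n w. (1 - exp (- ?v n * Z w)) / ?v n * W w"
  have integrable: "integrable M (\<lambda>w. W w * exp (- v * Z w))" if "v \<ge> 0" for v
  proof (rule Bochner_Integration.integrable_bound[OF \<open>integrable M W\<close>])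
    show "AE w in M. norm (W w * exp (- v * Z w)) \<le> norm (W w)"
      using that Z_nonneg W_nonneg by (intro AE_I2) (simp add: mult_left_le)
  qed measurable
  have "(\<lambda>n. \<integral>\<^sup>+ w. ennreal (?q n w) \<partial>M) \<longlonglongrightarrow> (\<integral>\<^sup>+ w. ennreal (Z w * W w) \<partial>M)"
    using Z_nonneg W_nonneg by (rule nn_integral_difference_quotients_LIMSEQ) measurable
  moreover have "(\<lambda>n. \<integral>\<^sup>+ w. ennreal (?q n w) \<partial>M) \<longlonglongrightarrow> ennreal D"
  proof -
    have "(\<integral>\<^sup>+ w. ennreal (?q n w) \<partial>M) = ennreal ((\<Phi> 0 - \<Phi> (?v n)) / ?v n)" for n
    proof -
      have q_eq: "?q n = (\<lambda>w. (W w * exp (- 0 * Z w) - W w * exp (- ?v n * Z w)) / ?v n)"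
        by (simp add: fun_eq_iff field_simps)
      have "integrable M (?q n)"
        unfolding q_eq by (intro integrable_divide Bochner_Integration.integrable_diff integrable) auto
      then have "(\<integral>\<^sup>+ w. ennreal (?q n w) \<partial>M) = ennreal (\<integral>w. ?q n w \<partial>M)"
        by (rule nn_integral_eq_integral) (simp add: Z_nonneg W_nonneg)
      also have "(\<integral>w. ?q n w \<partial>M) =
          ((\<integral>w. W w * exp (- 0 * Z w) \<partial>M) - (\<integral>w. W w * exp (- ?v n * Z w) \<partial>M)) / ?v n"
        unfolding q_eq integral_divide_zero
        by (rule arg_cong[where f="\<lambda>x. x / _"], rule Bochner_Integration.integral_diff)
          (simp_all only: integrable order_refl inverse_nonnegative_iff_nonnegative of_nat_0_le_iff)
      also have "\<dots> = (\<Phi> 0 - \<Phi> (?v n)) / ?v n"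
        by (simp only: Laplace order_refl inverse_nonnegative_iff_nonnegative of_nat_0_le_iff)
      finally show ?thesis .
    qed
    moreover have "(\<lambda>n. (\<Phi> 0 - \<Phi> (?v n)) / ?v n) \<longlonglongrightarrow> D"
      using tendsto_minus[OF DERIV_imp_difference_quotients_LIMSEQ[OF deriv]]
      by (simp add: minus_divide_left)
    ultimately show ?thesis
      by (simp add: tendsto_ennrealI)
  qed
  ultimately show ?thesis
    using LIMSEQ_unique by blast
qed

lemma (in prob_space) prob_eq_lim_expectation:
  assumes "S \<in> events" and "\<And>n. f n \<in> borel_measurable M" and "\<And>n w. \<bar>f n w\<bar> \<le> 1"
    and "\<And>w. w \<in> space M \<Longrightarrow> (\<lambda>n. f n w) \<longlonglongrightarrow> indicator S w"
    and lim: "(\<lambda>n. expectation (f n)) \<longlonglongrightarrow> p"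
  shows "prob S = p"
proof -
  have "(\<lambda>n. expectation (f n)) \<longlonglongrightarrow> expectation (indicator S)"
    by (rule integral_dominated_convergence[where w="\<lambda>_. 1"]) (use assms in auto)
  with lim show ?thesis
    using \<open>S \<in> events\<close> LIMSEQ_unique by auto
qed

lemma borel_measurable_indicator_times_continuous_on:
  fixes f :: "real \<Rightarrow> real"
  assumes "continuous_on {0<..} f"
  shows "(\<lambda>l. indicator {0<..} l * f l) \<in> borel_measurable borel"
  using borel_measurable_continuous_on_indicator[OF _ assms] by simp

lemma nn_integral_const_plus_indicator:
  assumes "A \<in> sets N" and "l \<ge> 0" "u \<ge> 0"
  shows "(\<integral>\<^sup>+ x. ennreal (l + u * indicator A x) \<partial>N) =
    ennreal l * emeasure N (space N) + ennreal u * emeasure N A"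
proof -
  have "(\<integral>\<^sup>+ x. ennreal (l + u * indicator A x) \<partial>N) =
      (\<integral>\<^sup>+ x. ennreal l + ennreal u * indicator A x \<partial>N)"
    using assms by (intro nn_integral_cong) (auto simp: indicator_def)
  also have "\<dots> = ennreal l * emeasure N (space N) + ennreal u * emeasure N A"
    using assms by (simp add: nn_integral_add nn_integral_cmult_indicator)
  finally show ?thesis .
qed

lemma borel_measurable_neg_exp_enn [measurable]: "neg_exp_enn \<in> borel_measurable borel"
proof -
  have "neg_exp_enn = (\<lambda>L. indicator {..<\<infinity>} L * exp (- enn2real L))"
    by (auto simp: fun_eq_iff neg_exp_enn_def indicator_def top.not_eq_extremum)
  also have "\<dots> \<in> borel_measurable borel" by measurable
  finally show ?thesis .
qed

lemma abs_neg_exp_enn_le_1: "\<bar>neg_exp_enn L\<bar> \<le> 1"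
  by (simp add: neg_exp_enn_def)

lemma neg_exp_enn_ennreal: "x \<ge> 0 \<Longrightarrow> neg_exp_enn (ennreal x) = exp (- x)"
  by (simp add: neg_exp_enn_def)

lemma neg_exp_enn_LIMSEQ_finite:
  "(\<lambda>n. neg_exp_enn (ennreal (inverse (real (Suc n))) * X)) \<longlonglongrightarrow> indicator {..<\<infinity>} X"
proof (cases X)
  case (real x)
  then have "neg_exp_enn (ennreal (inverse (real (Suc n))) * X) = exp (- (inverse (real (Suc n)) * x))" for n
    by (simp add: neg_exp_enn_ennreal ennreal_mult'[symmetric])
  moreover have "(\<lambda>n. exp (- (inverse (real (Suc n)) * x))) \<longlonglongrightarrow> exp (- (0 * x))"
    by (intro tendsto_intros LIMSEQ_inverse_real_of_nat)
  ultimately show ?thesis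
    using real by simp
qed (simp add: ennreal_mult_top neg_exp_enn_def)

lemma neg_exp_enn_LIMSEQ_zero:
  "(\<lambda>n. neg_exp_enn (ennreal (real (Suc n)) * X)) \<longlonglongrightarrow> indicator {0} X"
proof (cases X)
  case (real x)
  then have "neg_exp_enn (ennreal (real (Suc n)) * X) = exp (real (Suc n) * (- x))" for n
    by (simp add: neg_exp_enn_ennreal ennreal_mult'[symmetric] del: of_nat_Suc)
  then have "neg_exp_enn (ennreal (real (Suc n)) * X) = exp (- x) ^ Suc n" for n
    by (simp only: exp_of_nat_mult)
  moreover have "(\<lambda>n. exp (- x) ^ Suc n) \<longlonglongrightarrow> 0" if "x > 0"
    using that by (intro LIMSEQ_Suc LIMSEQ_power_zero) simp
  ultimately show ?thesis
    using real by (cases "x = 0") auto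
qed (simp add: ennreal_mult_top neg_exp_enn_def)

section \<open>The Laplace exponent of the Levy intensity\<close>

locale levy_intensity =
  fixes \<rho> :: "real measure"
  assumes rho_sets: "sets \<rho> = sets borel"
    and rho_support: "emeasure \<rho> {..0} = 0"
    and rho_levy: "(\<integral>\<^sup>+ s. ennreal (min s 1) \<partial>\<rho>) < \<infinity>"
    and rho_infinite: "emeasure \<rho> {0<..} = \<infinity>"
    and tau2: "(\<integral>\<^sup>+ s. ennreal (indicator {1..} s * s\<^sup>2) \<partial>\<rho>) < \<infinity>"
begin

definition psi :: "real \<Rightarrow> real" where
  "psi l = (\<integral>s. (1 - exp (- l * s)) \<partial>\<rho>)"

definition tau :: "nat \<Rightarrow> real \<Rightarrow> real" where
  "tau k l = (\<integral>s. s^k * exp (- l * s) \<partial>\<rho>)"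

lemma borel_measurable_rho: "f \<in> borel_measurable borel \<Longrightarrow> f \<in> borel_measurable \<rho>"
  using measurable_cong_sets[OF rho_sets] by blast

lemma space_rho: "space \<rho> = UNIV"
  using sets_eq_imp_space_eq[OF rho_sets] by simp

lemma AE_rho_pos: "AE s in \<rho>. s > 0"
proof (rule AE_I')
  show "{..0} \<in> null_sets \<rho>" using rho_support rho_sets by (auto simp: null_sets_def)
qed auto

lemma integrable_min_1: "integrable \<rho> (\<lambda>s. min s 1)"
proof (rule integrableI_nonneg)
  show "AE s in \<rho>. 0 \<le> min s 1" using AE_rho_pos by eventually_elim auto
  show "(\<integral>\<^sup>+ s. ennreal (min s 1) \<partial>\<rho>) < \<infinity>" by (rule rho_levy)
qed (simp add: borel_measurable_rho)

lemma integrable_square_tail: "integrable \<rho> (\<lambda>s. indicator {1..} s * s\<^sup>2)"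
proof (rule integrableI_nonneg)
  show "(\<integral>\<^sup>+ s. ennreal (indicator {1..} s * s\<^sup>2) \<partial>\<rho>) < \<infinity>" by (rule tau2)
qed (simp_all add: borel_measurable_rho)

lemma integrable_rho_bound:
  fixes f g :: "real \<Rightarrow> real"
  assumes "f \<in> borel_measurable borel" "integrable \<rho> g" "\<And>s. s > 0 \<Longrightarrow> \<bar>f s\<bar> \<le> g s"
  shows "integrable \<rho> f"
proof (rule Bochner_Integration.integrable_bound[OF assms(2)])
  show "AE s in \<rho>. norm (f s) \<le> norm (g s)"
    using AE_rho_pos by eventually_elim (use assms(3) in force)
qed (simp add: borel_measurable_rho assms(1))

lemma integrable_psi:
  assumes "l \<ge> 0" shows "integrable \<rho> (\<lambda>s. 1 - exp (- l * s))"
proof (rule integrable_rho_bound[where g="\<lambda>s. (l + 1) * min s 1"])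
  show "\<bar>1 - exp (- l * s)\<bar> \<le> (l + 1) * min s 1" if s: "s > 0" for s
  proof -
    have "1 - l * s \<le> exp (- l * s)" "exp (- l * s) \<le> 1"
      using exp_ge_add_one_self[of "- l * s"] assms s by auto
    then show ?thesis
      using assms s by (cases "s \<le> 1") (auto simp: algebra_simps)
  qed
qed (use integrable_min_1 in auto)

lemma integrable_tau:
  assumes "l > 0" "k > 0" shows "integrable \<rho> (\<lambda>s. s^k * exp (- l * s))"
  by (rule integrable_rho_bound[where g="\<lambda>s. ((real k / l)^k + 1) * min s 1"])
    (use integrable_min_1 power_times_exp_le_min[OF assms(1) _ assms(2)] in auto)

lemma integrable_tau_at_0:
  assumes "l \<ge> 0" "k > 0" "k \<le> 2" shows "integrable \<rho> (\<lambda>s. s^k * exp (- l * s))"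
proof (rule integrable_rho_bound[where g="\<lambda>s. min s 1 + indicator {1..} s * s\<^sup>2"])
  show "\<bar>s^k * exp (- l * s)\<bar> \<le> min s 1 + indicator {1..} s * s\<^sup>2" if s: "s > 0" for s
  proof -
    have "s^k \<le> min s 1 + indicator {1..} s * s\<^sup>2"
    proof (cases "s \<le> 1")
      case True
      then have "s^k \<le> s" using s assms by (simp add: power_decreasing[of 1 k s, simplified])
      then show ?thesis using True by (simp add: indicator_def)
    next
      case False
      then have "s^k \<le> s^2" using assms by (intro power_increasing) auto
      moreover have "min s 1 + indicator {1..} s * s\<^sup>2 = 1 + s^2" using False by (simp add: indicator_def)
      ultimately show ?thesis by linarith
    qed
    moreover have "s^k * exp (- l * s) \<le> s^k"
      using assms s by (simp add: mult_left_le)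
    moreover have "0 \<le> s^k * exp (- l * s)"
      using s by simp
    ultimately show ?thesis by linarith
  qed
qed (use integrable_min_1 integrable_square_tail in auto)

lemma DERIV_psi:
  assumes l: "l > 0" shows "DERIV psi l :> tau 1 l"
proof -
  have "DERIV (\<lambda>x. \<integral>s. (1 - exp (- x * s)) \<partial>\<rho>) l :> (\<integral>s. s^1 * exp (- l * s) \<partial>\<rho>)"
  proof (rule DERIV_integral_dominated[where c="l/2" and d="2*l" and g="\<lambda>s. ((1 / (l/2))^1 + 1) * min s 1"])
    show "AE s in \<rho>. \<forall>x\<in>{l/2<..<2*l}. DERIV (\<lambda>x. 1 - exp (- x * s)) x :> s^1 * exp (- x * s)"
      by (intro AE_I2 ballI) (auto intro!: derivative_eq_intros)
    show "AE s in \<rho>. \<forall>x\<in>{l/2<..<2*l}. \<bar>s^1 * exp (- x * s)\<bar> \<le> ((1 / (l/2))^1 + 1) * min s 1"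
      using AE_rho_pos by eventually_elim (use power_times_exp_le_min_uniform[OF l, of _ 1] in auto)
  qed (use l integrable_psi integrable_min_1 in \<open>auto simp: borel_measurable_rho\<close>)
  then show ?thesis unfolding psi_def[abs_def] tau_def by simp
qed

lemma DERIV_tau:
  assumes l: "l > 0" and k: "k > 0" shows "DERIV (tau k) l :> - tau (Suc k) l"
proof -
  have "DERIV (\<lambda>x. \<integral>s. s^k * exp (- x * s) \<partial>\<rho>) l :> (\<integral>s. - (s^(Suc k) * exp (- l * s)) \<partial>\<rho>)"
  proof (rule DERIV_integral_dominated[where c="l/2" and d="2*l"
        and g="\<lambda>s. ((real (Suc k) / (l/2))^(Suc k) + 1) * min s 1"])
    show "AE s in \<rho>. \<forall>x\<in>{l/2<..<2*l}. DERIV (\<lambda>x. s^k * exp (- x * s)) x :> - (s^(Suc k) * exp (- x * s))"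
      by (intro AE_I2 ballI) (auto intro!: derivative_eq_intros)
    show "AE s in \<rho>. \<forall>x\<in>{l/2<..<2*l}.
        \<bar>- (s^(Suc k) * exp (- x * s))\<bar> \<le> ((real (Suc k) / (l/2))^(Suc k) + 1) * min s 1"
      using AE_rho_pos
    proof eventually_elim
      case (elim s)
      show ?case using power_times_exp_le_min_uniform[OF l elim, of "Suc k"] by auto
    qed
  qed (use l k integrable_tau integrable_min_1 in \<open>auto simp: borel_measurable_rho\<close>)
  then show ?thesis unfolding tau_def[abs_def] by simp
qed

lemma continuous_on_psi: "continuous_on {0<..} psi"
  by (intro continuous_at_imp_continuous_on ballI DERIV_isCont[OF DERIV_psi]) auto

lemma continuous_on_tau: "k > 0 \<Longrightarrow> continuous_on {0<..} (tau k)"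
  by (intro continuous_at_imp_continuous_on ballI DERIV_isCont[OF DERIV_tau]) auto

lemma psi_mono:
  assumes "0 \<le> l" "l \<le> l'" shows "psi l \<le> psi l'"
  unfolding psi_def
proof (rule integral_mono_AE)
  show "AE s in \<rho>. 1 - exp (- l * s) \<le> 1 - exp (- l' * s)"
    using AE_rho_pos by eventually_elim (use assms in \<open>simp add: mult_right_mono\<close>)
qed (use assms integrable_psi in auto)

lemma psi_0 [simp]: "psi 0 = 0"
  by (simp add: psi_def)

lemma psi_nonneg: "l \<ge> 0 \<Longrightarrow> psi l \<ge> 0"
  using psi_mono[of 0 l] by simp

lemma tau_nonneg: "tau k l \<ge> 0"
  unfolding tau_def by (rule integral_nonneg_AE) (use AE_rho_pos in \<open>eventually_elim, simp\<close>)

lemma tau_2_le_tau_2_0: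
  assumes "l \<ge> 0" shows "tau 2 l \<le> tau 2 0"
  unfolding tau_def
proof (rule integral_mono_AE)
  show "AE s in \<rho>. s^2 * exp (- l * s) \<le> s^2 * exp (- 0 * s)"
    using AE_rho_pos by eventually_elim (use assms in \<open>simp add: mult_left_le\<close>)
  show "integrable \<rho> (\<lambda>s. s^2 * exp (- l * s))" "integrable \<rho> (\<lambda>s. s^2 * exp (- 0 * s))"
    using assms by (intro integrable_tau_at_0; simp)+
qed

lemma psi_ge_linear:
  assumes "0 \<le> l" "l \<le> 1" shows "l * psi 1 \<le> psi l"
proof (cases "l = 0")
  case False
  have "l * psi 1 = (\<integral>s. l * (1 - exp (- 1 * s)) \<partial>\<rho>)"
    unfolding psi_def by simp
  also have "\<dots> \<le> psi l"
    unfolding psi_def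
  proof (rule integral_mono_AE)
    show "AE s in \<rho>. l * (1 - exp (- 1 * s)) \<le> 1 - exp (- l * s)"
      using AE_rho_pos
    proof eventually_elim
      case (elim s)
      have "(1 - exp (- 1 * s)) / 1 \<le> (1 - exp (- l * s)) / l"
        using assms False elim by (intro one_minus_exp_div_antimono) auto
      then show ?case
        using assms False by (simp add: field_simps)
    qed
    show "integrable \<rho> (\<lambda>s. l * (1 - exp (- 1 * s)))"
      using integrable_psi[of 1] by simp
  qed (use assms integrable_psi in auto)
  finally show ?thesis .
qed simp

lemma psi_1_pos: "psi 1 > 0"
proof (rule ccontr)
  assume "\<not> psi 1 > 0"
  then have "psi 1 = 0" using psi_nonneg[of 1] by simp
  then have "AE s in \<rho>. 1 - exp (- 1 * s) = 0"
    unfolding psi_def using AE_rho_pos integrable_psi[of 1]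
    by (subst (asm) integral_nonneg_eq_0_iff_AE) (auto elim: AE_mp)
  then have "AE s in \<rho>. False"
    using AE_rho_pos by eventually_elim simp
  then have "emeasure \<rho> (space \<rho>) = 0"
    by (simp add: eventually_False ae_filter_eq_bot_iff)
  moreover have "emeasure \<rho> {0<..} \<le> emeasure \<rho> (space \<rho>)"
    by (intro emeasure_mono) (auto simp: rho_sets space_rho)
  ultimately show False
    using rho_infinite by simp
qed

lemma ennreal_psi:
  assumes "l \<ge> 0" shows "ennreal (psi l) = (\<integral>\<^sup>+ s. ennreal (1 - exp (- l * s)) \<partial>\<rho>)"
  unfolding psi_def
proof (rule nn_integral_eq_integral[symmetric])
  show "AE s in \<rho>. 0 \<le> 1 - exp (- l * s)"
    using AE_rho_pos by eventually_elim (use assms in simp)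
qed (rule integrable_psi[OF assms])

lemma psi_of_nat_LIMSEQ_infinity: "(\<lambda>n. ennreal (psi (real n))) \<longlonglongrightarrow> \<infinity>"
proof -
  let ?f = "\<lambda>(n::nat) s. ennreal (1 - exp (- real n * s))"
  have "(\<lambda>n. integral\<^sup>N \<rho> (?f n)) \<longlonglongrightarrow> (\<integral>\<^sup>+ s. indicator {0<..} s \<partial>\<rho>)"
  proof (rule nn_integral_LIMSEQ)
    show "incseq ?f"
    proof (intro incseq_SucI le_funI)
      fix n :: nat and s :: real
      show "?f n s \<le> ?f (Suc n) s"
      proof (cases "s \<ge> 0")
        case True
        then show ?thesis by (intro ennreal_leI) (simp add: algebra_simps)
      next
        case False
        then have "1 - exp (- real n * s) \<le> 0" by (simp add: mult_nonneg_nonpos)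
        then show ?thesis by (simp add: ennreal_neg)
      qed
    qed
    show "(\<lambda>n. ?f n s) \<longlonglongrightarrow> indicator {0<..} s" for s
    proof (cases "s > 0")
      case True
      have "(\<lambda>n. exp (- s) ^ n) \<longlonglongrightarrow> 0"
        using True by (intro LIMSEQ_power_zero) simp
      then have "(\<lambda>n. 1 - exp (- real n * s)) \<longlonglongrightarrow> 1 - 0"
        by (intro tendsto_diff tendsto_const) (simp add: exp_of_nat_mult[symmetric])
      then have "(\<lambda>n. ?f n s) \<longlonglongrightarrow> ennreal 1"
        by (intro tendsto_ennrealI) simp
      then show ?thesis
        using True by simp
    next
      case False
      then have "?f n s = 0" for n by (simp add: ennreal_neg mult_nonneg_nonpos)
      then show ?thesis using False by simp
    qed
  qed (simp add: borel_measurable_rho)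
  moreover have "(\<integral>\<^sup>+ s. indicator {0<..} s \<partial>\<rho>) = \<infinity>"
    using rho_infinite by (simp add: rho_sets)
  ultimately show ?thesis
    by (simp add: ennreal_psi)
qed

lemma filterlim_psi_at_top: "filterlim psi at_top at_top"
  unfolding filterlim_at_top
proof
  fix Z :: real
  have "\<forall>\<^sub>F n in sequentially. ennreal Z < ennreal (psi (real n))"
    by (rule order_tendstoD(1)[OF psi_of_nat_LIMSEQ_infinity]) simp
  then obtain n :: nat where "ennreal Z < ennreal (psi (real n))"
    by (auto simp: eventually_sequentially)
  then have n: "Z \<le> psi (real n)"
    by (metis ennreal_leI leD nle_le)
  show "\<forall>\<^sub>F x in at_top. Z \<le> psi x"
    using eventually_ge_at_top[of "real n"]
  proof eventually_elim
    case (elim x)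
    then show ?case using psi_mono[of "real n" x] n by simp
  qed
qed

lemma psi_inverse_Suc_LIMSEQ_0: "(\<lambda>n. psi (inverse (real (Suc n)))) \<longlonglongrightarrow> 0"
proof -
  let ?l = "\<lambda>n. inverse (real (Suc n))"
  have "(\<lambda>n. \<integral>s. (1 - exp (- ?l n * s)) \<partial>\<rho>) \<longlonglongrightarrow> (\<integral>s. 0 \<partial>\<rho>)"
  proof (rule integral_dominated_convergence[where w="\<lambda>s. min s 1"])
    show "AE s in \<rho>. (\<lambda>n. 1 - exp (- ?l n * s)) \<longlonglongrightarrow> 0"
    proof (intro AE_I2)
      fix s :: real
      have "(\<lambda>n. 1 - exp (- ?l n * s)) \<longlonglongrightarrow> 1 - exp (- 0 * s)"
        by (intro tendsto_intros LIMSEQ_inverse_real_of_nat)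
      then show "(\<lambda>n. 1 - exp (- ?l n * s)) \<longlonglongrightarrow> 0" by simp
    qed
    show "AE s in \<rho>. norm (1 - exp (- ?l n * s)) \<le> min s 1" for n
      using AE_rho_pos
    proof eventually_elim
      case (elim s)
      have l: "0 < ?l n" "?l n \<le> 1" by (auto simp: field_simps)
      have "exp (- ?l n * s) \<le> 1" "1 - ?l n * s \<le> exp (- ?l n * s)"
        using exp_ge_add_one_self[of "- ?l n * s"] elim l by auto
      moreover have "?l n * s \<le> s"
        using l elim by (simp add: mult_left_le_one_le)
      ultimately show ?case by (simp add: abs_if)
    qed
  qed (simp_all add: borel_measurable_rho integrable_min_1)
  then show ?thesis unfolding psi_def by simp
qed

section \<open>Integrability and decay of I_a\<close>

definition Ia_density :: "real \<Rightarrow> real \<Rightarrow> real" where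
  "Ia_density b l = indicator {0<..} l * (l * exp (- b * psi l) * tau 2 l)"

definition tail_majorant :: "real \<Rightarrow> real \<Rightarrow> real" where
  "tail_majorant b l = indicator {0<..} l * (b/2 * tau 1 (l/2) * exp (- b * psi (l/2)))"

lemma Ia_density_eq: "Ia_density b l = indicator {0<..} l * Ia_integrand \<rho> b l"
  by (simp add: Ia_density_def Ia_integrand_def psi_def tau_def)

lemma Ia_density_nonneg: "Ia_density b l \<ge> 0"
  unfolding Ia_density_def using tau_nonneg[of 2 l] by (auto simp: indicator_def)

lemma borel_measurable_Ia_density [measurable]: "Ia_density b \<in> borel_measurable borel"
  unfolding Ia_density_def[abs_def]
  by (intro borel_measurable_indicator_times_continuous_on continuous_intros continuous_on_psi
      continuous_on_tau) auto

lemma borel_measurable_tail_majorant [measurable]: "tail_majorant b \<in> borel_measurable borel"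
proof -
  have "continuous_on {0<..} (\<lambda>l::real. l/2)" "(\<lambda>l. l/2) ` {0<..} \<subseteq> {0::real<..}"
    by (auto intro!: continuous_intros)
  then have "continuous_on {0<..} (\<lambda>l. tau 1 (l/2))" "continuous_on {0<..} (\<lambda>l. psi (l/2))"
    by (auto intro: continuous_on_compose2 continuous_on_tau continuous_on_psi)
  then show ?thesis
    unfolding tail_majorant_def[abs_def]
    by (intro borel_measurable_indicator_times_continuous_on continuous_intros)
qed

lemma nn_integral_tail_majorant:
  assumes b: "b > 0"
  shows "(\<integral>\<^sup>+ l. ennreal (tail_majorant b l) * indicator {1..} l \<partial>lborel) = ennreal (exp (- b * psi (1/2)))"
proof -
  have "(\<integral>\<^sup>+ l. ennreal (tail_majorant b l) * indicator {1..} l \<partial>lborel) = 0 - (- exp (- b * psi (1/2)))"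
  proof (rule nn_integral_FTC_atLeast[where F="\<lambda>l. - exp (- b * psi (l/2))"])
    fix x :: real assume x: "1 \<le> x"
    have half: "DERIV (\<lambda>l. l/2) x :> 1/2"
      by (auto intro!: derivative_eq_intros)
    have "DERIV (\<lambda>l. psi (l/2)) x :> tau 1 (x/2) * (1/2)"
      using DERIV_chain2[OF DERIV_psi[of "x/2"] half] x by simp
    then show "DERIV (\<lambda>l. - exp (- b * psi (l/2))) x :> tail_majorant b x"
      using x by (auto intro!: derivative_eq_intros simp: tail_majorant_def)
    show "0 \<le> tail_majorant b x"
      using x b tau_nonneg[of 1 "x/2"] by (simp add: tail_majorant_def)
  next
    have "filterlim (\<lambda>l::real. (1/2) * l) at_top at_top"
      by (rule filterlim_tendsto_pos_mult_at_top[OF tendsto_const]) (auto simp: filterlim_ident)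
    then have "filterlim (\<lambda>l::real. l/2) at_top at_top"
      by simp
    then have "filterlim (\<lambda>l. b * psi (l/2)) at_top at_top"
      using b by (intro filterlim_tendsto_pos_mult_at_top[OF tendsto_const]
          filterlim_compose[OF filterlim_psi_at_top])
    then have "filterlim (\<lambda>l. - (b * psi (l/2))) at_bot at_top"
      by (simp add: filterlim_uminus_at_bot)
    then have "((\<lambda>l. exp (- (b * psi (l/2)))) \<longlongrightarrow> 0) at_top"
      by (rule filterlim_compose[OF exp_at_bot])
    then show "((\<lambda>l. - exp (- b * psi (l/2))) \<longlongrightarrow> 0) at_top"
      using tendsto_minus by fastforce
  qed simp
  then show ?thesis by simp
qed

lemma times_tau_2_le_tau_1_half:
  assumes l: "l > 0" shows "l * tau 2 l \<le> 2 * tau 1 (l/2)"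
proof -
  have "l * tau 2 l = (\<integral>s. l * (s^2 * exp (- l * s)) \<partial>\<rho>)"
    unfolding tau_def by simp
  also have "\<dots> \<le> (\<integral>s. 2 * (s^1 * exp (- (l/2) * s)) \<partial>\<rho>)"
  proof (rule integral_mono_AE)
    show "AE s in \<rho>. l * (s^2 * exp (- l * s)) \<le> 2 * (s^1 * exp (- (l/2) * s))"
      using AE_rho_pos
    proof eventually_elim
      case (elim s)
      define E where "E = exp (- (l/2) * s)"
      have E: "E > 0" "exp (l * s / 2) * E = 1"
        unfolding E_def by (simp_all flip: exp_add)
      have "l * s / 2 \<le> exp (l * s / 2)"
        using exp_ge_add_one_self[of "l * s / 2"] by linarith
      then have "l * s * E \<le> 2 * exp (l * s / 2) * E"
        using E by (intro mult_right_mono) auto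
      also have "\<dots> = 2"
        using E(2) by simp
      finally have "l * s * E \<le> 2" .
      have "l * (s^2 * exp (- l * s)) = s * (l * s * E) * E"
        unfolding E_def by (simp add: power2_eq_square flip: exp_add)
      also have "\<dots> \<le> s * 2 * E"
        using \<open>l * s * E \<le> 2\<close> E elim by (intro mult_right_mono mult_left_mono) auto
      finally show ?case
        unfolding E_def by simp
    qed
    show "integrable \<rho> (\<lambda>s. l * (s^2 * exp (- l * s)))"
      using integrable_tau[of l 2] l by simp
    show "integrable \<rho> (\<lambda>s. 2 * (s^1 * exp (- (l/2) * s)))"
      using integrable_tau[of "l/2" 1] l by simp
  qed
  also have "\<dots> = 2 * tau 1 (l/2)"
    unfolding tau_def by simp
  finally show ?thesis .
qed

lemma Ia_density_le_tail_majorant: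
  assumes b: "b > 0" and l: "l \<ge> 1" shows "Ia_density b l \<le> 4 / b * tail_majorant b l"
proof -
  have "l * tau 2 l \<le> 2 * tau 1 (l/2)"
    using l by (intro times_tau_2_le_tau_1_half) simp
  moreover have "exp (- b * psi l) \<le> exp (- b * psi (l/2))"
    using psi_mono[of "l/2" l] l b by simp
  ultimately have "(l * tau 2 l) * exp (- b * psi l) \<le> (2 * tau 1 (l/2)) * exp (- b * psi (l/2))"
    by (rule mult_mono) (simp_all add: tau_nonneg)
  then show ?thesis
    using l b by (simp add: Ia_density_def tail_majorant_def mult_ac)
qed

lemma Ia_density_le_exp_times_Ia_density_1:
  assumes b: "b \<ge> 1" and l: "l \<ge> 1"
  shows "Ia_density b l \<le> exp (- (b - 1) * psi 1) * Ia_density 1 l"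
proof -
  have "exp (- b * psi l) = exp (- (b - 1) * psi l) * exp (- 1 * psi l)"
    by (simp add: algebra_simps flip: exp_add)
  also have "\<dots> \<le> exp (- (b - 1) * psi 1) * exp (- 1 * psi l)"
    using psi_mono[of 1 l] l b by (simp add: mult_left_mono_neg)
  finally have "(l * tau 2 l) * exp (- b * psi l) \<le> (l * tau 2 l) * (exp (- (b - 1) * psi 1) * exp (- 1 * psi l))"
    using l tau_nonneg[of 2 l] by (intro mult_left_mono) auto
  then show ?thesis
    using l by (simp add: Ia_density_def mult_ac)
qed

lemma nn_integral_Ia_density_split:
  "(\<integral>\<^sup>+ l. ennreal (Ia_density b l) \<partial>lborel) =
    (\<integral>\<^sup>+ l. ennreal (Ia_density b l) * indicator {..<1} l \<partial>lborel) + (\<integral>\<^sup>+ l. ennreal (Ia_density b l) * indicator {1..} l \<partial>lborel)"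
proof -
  have "(\<integral>\<^sup>+ l. ennreal (Ia_density b l) \<partial>lborel) =
      (\<integral>\<^sup>+ l. ennreal (Ia_density b l) * indicator {..<1} l + ennreal (Ia_density b l) * indicator {1..} l \<partial>lborel)"
    by (intro nn_integral_cong) (auto simp: indicator_def)
  then show ?thesis
    by (simp add: nn_integral_add)
qed

lemma nn_integral_Ia_density_near_0:
  assumes b: "b > 0"
  shows "(\<integral>\<^sup>+ l. ennreal (Ia_density b l) * indicator {..<1} l \<partial>lborel) \<le> ennreal (tau 2 0 / (b * psi 1)^2)"
proof -
  define t where "t = b * psi 1"
  have t: "t > 0" unfolding t_def using b psi_1_pos by simp
  have "(\<integral>\<^sup>+ l. ennreal (Ia_density b l) * indicator {..<1} l \<partial>lborel) \<le>
      (\<integral>\<^sup>+ l. ennreal (indicator {0<..} l * (tau 2 0 * l^1 * exp (- l * t))) \<partial>lborel)"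
  proof (intro nn_integral_mono)
    fix l :: real
    show "ennreal (Ia_density b l) * indicator {..<1} l \<le> ennreal (indicator {0<..} l * (tau 2 0 * l^1 * exp (- l * t)))"
    proof (cases "0 < l \<and> l < 1")
      case True
      have "exp (- b * psi l) \<le> exp (- l * t)"
        using psi_ge_linear[of l] True b unfolding t_def by (simp add: mult_left_mono)
      then have "l * exp (- b * psi l) * tau 2 l \<le> l * exp (- l * t) * tau 2 0"
        using True tau_2_le_tau_2_0[of l] tau_nonneg[of 2 l] by (intro mult_mono mult_left_mono) auto
      then show ?thesis
        using True by (simp add: Ia_density_def ennreal_leI mult_ac)
    qed (auto simp: Ia_density_def)
  qed
  also have "\<dots> = ennreal (tau 2 0 * fact 1 / t^(1+1))"
    using t tau_nonneg by (rule nn_integral_power_times_exp)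
  also have "\<dots> = ennreal (tau 2 0 / (b * psi 1)^2)"
    unfolding t_def by (simp add: power2_eq_square)
  finally show ?thesis .
qed

lemma nn_integral_Ia_density_tail:
  assumes b: "b > 0"
  shows "(\<integral>\<^sup>+ l. ennreal (Ia_density b l) * indicator {1..} l \<partial>lborel) \<le> ennreal (4 / b)"
proof -
  have "(\<integral>\<^sup>+ l. ennreal (Ia_density b l) * indicator {1..} l \<partial>lborel) \<le>
      (\<integral>\<^sup>+ l. ennreal (4 / b) * (ennreal (tail_majorant b l) * indicator {1..} l) \<partial>lborel)"
    using Ia_density_le_tail_majorant[OF b] b
    by (intro nn_integral_mono) (auto simp: ennreal_mult'[symmetric] intro!: ennreal_leI split: split_indicator)
  also have "\<dots> = ennreal (4 / b) * ennreal (exp (- b * psi (1/2)))"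
    by (simp add: nn_integral_cmult nn_integral_tail_majorant[OF b])
  also have "\<dots> \<le> ennreal (4 / b) * ennreal 1"
    using psi_nonneg[of "1/2"] b by (intro mult_left_mono ennreal_leI) auto
  finally show ?thesis by simp
qed

lemma nn_integral_Ia_density_tail_decay:
  assumes b: "b \<ge> 1"
  shows "(\<integral>\<^sup>+ l. ennreal (Ia_density b l) * indicator {1..} l \<partial>lborel) \<le> ennreal (4 * exp (- (b - 1) * psi 1))"
proof -
  let ?c = "exp (- (b - 1) * psi 1)"
  have "(\<integral>\<^sup>+ l. ennreal (Ia_density b l) * indicator {1..} l \<partial>lborel) \<le>
      (\<integral>\<^sup>+ l. ennreal ?c * (ennreal (Ia_density 1 l) * indicator {1..} l) \<partial>lborel)"
    using Ia_density_le_exp_times_Ia_density_1[OF b]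
    by (intro nn_integral_mono) (auto simp: ennreal_mult'[symmetric] intro!: ennreal_leI split: split_indicator)
  also have "\<dots> = ennreal ?c * (\<integral>\<^sup>+ l. ennreal (Ia_density 1 l) * indicator {1..} l \<partial>lborel)"
    by (rule nn_integral_cmult) measurable
  also have "\<dots> \<le> ennreal ?c * ennreal (4 / 1)"
    by (intro mult_left_mono nn_integral_Ia_density_tail) auto
  finally show ?thesis
    by (simp add: ennreal_mult' mult.commute)
qed

lemma integrable_Ia_density:
  assumes "b > 0" shows "integrable lborel (Ia_density b)"
proof (rule integrableI_nonneg)
  have "(\<integral>\<^sup>+ l. ennreal (Ia_density b l) \<partial>lborel) \<le> ennreal (tau 2 0 / (b * psi 1)^2) + ennreal (4 / b)"
    unfolding nn_integral_Ia_density_split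
    by (intro add_mono nn_integral_Ia_density_near_0 nn_integral_Ia_density_tail assms)
  then show "(\<integral>\<^sup>+ l. ennreal (Ia_density b l) \<partial>lborel) < \<infinity>"
    by (simp add: le_less_trans)
qed (simp_all add: Ia_density_nonneg)

lemma set_integrable_Ia_integrand: "b > 0 \<Longrightarrow> set_integrable lborel {0<..} (Ia_integrand \<rho> b)"
  using integrable_Ia_density[of b] unfolding set_integrable_def by (simp add: Ia_density_eq[abs_def])

lemma Ia_eq: "Ia \<rho> b = b * (\<integral>l. Ia_density b l \<partial>lborel)"
  by (simp add: Ia_def set_lebesgue_integral_def Ia_density_eq)

lemma ennreal_Ia:
  assumes "b > 0" shows "ennreal (Ia \<rho> b) = ennreal b * (\<integral>\<^sup>+ l. ennreal (Ia_density b l) \<partial>lborel)"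
  using assms integrable_Ia_density[OF assms]
  by (simp add: Ia_eq nn_integral_eq_integral Ia_density_nonneg ennreal_mult)

lemma Ia_nonneg: "b \<ge> 0 \<Longrightarrow> Ia \<rho> b \<ge> 0"
  unfolding Ia_eq by (simp add: Ia_density_nonneg)

lemma Ia_bigo: "(\<lambda>b. Ia \<rho> b) \<in> O[at_top](\<lambda>b. 1 / b)"
proof (rule bigoI[where c="(tau 2 0 + 64) / (psi 1)^2"])
  define c where "c = psi 1"
  have c: "c > 0" unfolding c_def by (rule psi_1_pos)
  show "\<forall>\<^sub>F b in at_top. norm (Ia \<rho> b) \<le> (tau 2 0 + 64) / (psi 1)^2 * norm (1 / b)"
    using eventually_ge_at_top[of "2::real"]
  proof eventually_elim
    case (elim b)
    then have b: "b > 0" by simp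
    have "ennreal (\<integral>l. Ia_density b l \<partial>lborel) = (\<integral>\<^sup>+ l. ennreal (Ia_density b l) \<partial>lborel)"
      by (rule nn_integral_eq_integral[symmetric, OF integrable_Ia_density[OF b]]) (simp add: Ia_density_nonneg)
    also have "\<dots> \<le> ennreal (tau 2 0 / (b * c)^2) + ennreal (4 * exp (- (b - 1) * c))"
      unfolding nn_integral_Ia_density_split c_def
      by (intro add_mono nn_integral_Ia_density_near_0 nn_integral_Ia_density_tail_decay) (use elim in auto)
    finally have "(\<integral>l. Ia_density b l \<partial>lborel) \<le> tau 2 0 / (b * c)^2 + 4 * exp (- (b - 1) * c)"
      by (simp add: ennreal_plus[symmetric] tau_nonneg del: ennreal_plus)
    moreover have "exp (- (b - 1) * c) \<le> 16 / (b * c)^2"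
    proof -
      have "exp (- (b - 1) * c) = exp (- ((b - 1) * c))"
        by (simp add: algebra_simps)
      also have "\<dots> \<le> 4 / ((b - 1) * c)^2"
        using elim c by (intro exp_neg_le_four_div_square) simp
      also have "\<dots> \<le> 4 / (b * c / 2)^2"
        using elim c by (intro divide_left_mono power_mono mult_pos_pos) (auto simp: field_simps)
      finally show ?thesis by (simp add: power_divide)
    qed
    ultimately have "Ia \<rho> b \<le> b * (tau 2 0 / (b * c)^2 + 4 * (16 / (b * c)^2))"
      unfolding Ia_eq using b by (intro mult_left_mono) auto
    also have "\<dots> = (tau 2 0 + 64) / c^2 * (1 / b)"
      using b c by (simp add: field_simps power2_eq_square)
    finally show ?case
      using b Ia_nonneg[of b] unfolding c_def by simp
  qed
qed

end

section \<open>Mean and variance of the normalized measure\<close>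

locale homogeneous_crm = levy_intensity \<rho> for \<rho> +
  fixes H :: "'x::polish_space measure" and a :: real and M :: "'w measure" and \<mu> :: "'w \<Rightarrow> 'x measure"
  assumes H_prob: "prob_space H" and H_sets: "sets H = sets borel"
    and a_pos: "a > 0"
    and M_prob: "prob_space M"
    and mu_sets: "\<And>w. w \<in> space M \<Longrightarrow> sets (\<mu> w) = sets borel"
    and mu_meas: "\<And>A. A \<in> sets borel \<Longrightarrow> (\<lambda>w. emeasure (\<mu> w) A) \<in> borel_measurable M"
    and mu_laplace: "\<And>(h :: 'x \<Rightarrow> real) A. h \<in> borel_measurable borel \<Longrightarrow> (\<forall>x. h x \<ge> 0)
        \<Longrightarrow> bounded (range h) \<Longrightarrow> A \<in> sets borel \<Longrightarrow>
        prob_space.expectation M (\<lambda>w. neg_exp_enn (\<integral>\<^sup>+ x. ennreal (indicator A x * h x) \<partial>(\<mu> w)))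
        = exp (- a * (\<integral>x. indicator A x * (\<integral>s. 1 - exp (- s * h x) \<partial>\<rho>) \<partial>H))"
begin

sublocale M: prob_space M by (rule M_prob)
sublocale H: prob_space H by (rule H_prob)

definition total_mass :: "'w \<Rightarrow> ennreal" where
  "total_mass w = emeasure (\<mu> w) UNIV"

definition T :: "'w \<Rightarrow> real" where
  "T w = enn2real (total_mass w)"

definition Y :: "'x set \<Rightarrow> 'w \<Rightarrow> real" where
  "Y A w = enn2real (emeasure (\<mu> w) A)"

definition joint_laplace :: "'x set \<Rightarrow> real \<Rightarrow> real \<Rightarrow> real" where
  "joint_laplace A l u = exp (- a * (psi l + measure H A * (psi (l + u) - psi l)))"

lemma space_mu: "w \<in> space M \<Longrightarrow> space (\<mu> w) = UNIV"
  using sets_eq_imp_space_eq[OF mu_sets] by simp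

lemma space_H: "space H = UNIV"
  using sets_eq_imp_space_eq[OF H_sets] by simp

lemma borel_measurable_total_mass [measurable]: "total_mass \<in> borel_measurable M"
  unfolding total_mass_def[abs_def] by (rule mu_meas) simp

lemma borel_measurable_T [measurable]: "T \<in> borel_measurable M"
  unfolding T_def[abs_def] by measurable

lemma borel_measurable_Y: "A \<in> sets borel \<Longrightarrow> Y A \<in> borel_measurable M"
  unfolding Y_def[abs_def] by (intro borel_measurable_enn2real mu_meas)

lemma T_nonneg [simp]: "T w \<ge> 0" and Y_nonneg [simp]: "Y A w \<ge> 0"
  by (simp_all add: T_def Y_def)

lemma hnrmi_eq: "w \<in> space M \<Longrightarrow> hnrmi \<mu> w A = Y A w / T w"
  by (simp add: hnrmi_def Y_def T_def total_mass_def space_mu)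

lemma borel_measurable_hnrmi:
  assumes "A \<in> sets borel" shows "(\<lambda>w. hnrmi \<mu> w A) \<in> borel_measurable M"
proof -
  have [measurable]: "Y A \<in> borel_measurable M"
    using assms by (rule borel_measurable_Y)
  show ?thesis
    by (subst measurable_cong[OF hnrmi_eq]) measurable
qed

lemma integral_H_psi:
  assumes "A \<in> sets borel" "l \<ge> 0" "u \<ge> 0"
  shows "(\<integral>x. indicator UNIV x * (\<integral>s. 1 - exp (- s * (l + u * indicator A x)) \<partial>\<rho>) \<partial>H)
    = psi l + measure H A * (psi (l + u) - psi l)"
proof -
  have "(\<integral>s. 1 - exp (- s * c) \<partial>\<rho>) = psi c" for c
    unfolding psi_def by (simp add: mult.commute)
  then have "(\<lambda>x. indicator UNIV x * (\<integral>s. 1 - exp (- s * (l + u * indicator A x)) \<partial>\<rho>))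
      = (\<lambda>x. psi l + (psi (l + u) - psi l) * indicator A x)"
    by (auto simp: fun_eq_iff indicator_def)
  moreover have "integrable H (\<lambda>x. (psi (l + u) - psi l) * indicator A x :: real)"
    using assms H_sets by (auto simp: less_top[symmetric])
  ultimately show ?thesis
    using assms H.prob_space by (simp add: space_H)
qed

lemma expectation_neg_exp_enn_total_mass:
  assumes A: "A \<in> sets borel" and "l \<ge> 0" "u \<ge> 0"
  shows "M.expectation (\<lambda>w. neg_exp_enn (ennreal l * total_mass w + ennreal u * emeasure (\<mu> w) A))
    = joint_laplace A l u"
proof -
  let ?h = "\<lambda>x. l + u * indicator A x"
  have "bounded (range ?h)"
    by (rule bounded_subset[of "{l, l + u}"]) (auto simp: indicator_def)
  then have "M.expectation (\<lambda>w. neg_exp_enn (\<integral>\<^sup>+ x. ennreal (indicator UNIV x * ?h x) \<partial>(\<mu> w)))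
      = exp (- a * (\<integral>x. indicator UNIV x * (\<integral>s. 1 - exp (- s * ?h x) \<partial>\<rho>) \<partial>H))"
    using assms by (intro mu_laplace) (auto simp: indicator_def)
  also have "\<dots> = joint_laplace A l u"
    unfolding joint_laplace_def integral_H_psi[OF assms] ..
  finally have "M.expectation (\<lambda>w. neg_exp_enn (\<integral>\<^sup>+ x. ennreal (indicator UNIV x * ?h x) \<partial>(\<mu> w)))
      = joint_laplace A l u" .
  moreover have "(\<integral>\<^sup>+ x. ennreal (indicator UNIV x * ?h x) \<partial>(\<mu> w)) =
      ennreal l * total_mass w + ennreal u * emeasure (\<mu> w) A" if "w \<in> space M" for w
    using nn_integral_const_plus_indicator[of A "\<mu> w" l u] assms mu_sets[OF that]
    by (simp add: total_mass_def space_mu[OF that])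
  ultimately show ?thesis
    by (metis (no_types, lifting) Bochner_Integration.integral_cong)
qed

lemma expectation_neg_exp_enn_total_mass_only:
  "l \<ge> 0 \<Longrightarrow> M.expectation (\<lambda>w. neg_exp_enn (ennreal l * total_mass w)) = exp (- a * psi l)"
  using expectation_neg_exp_enn_total_mass[of UNIV l 0] by (simp add: joint_laplace_def)

lemma AE_total_mass_finite: "AE w in M. total_mass w < \<infinity>"
proof -
  let ?S = "{w \<in> space M. total_mass w < \<infinity>}"
  have "M.prob ?S = 1"
  proof (rule M.prob_eq_lim_expectation)
    show "(\<lambda>n. neg_exp_enn (ennreal (inverse (real (Suc n))) * total_mass w)) \<longlonglongrightarrow> indicator ?S w"
      if "w \<in> space M" for w
      using neg_exp_enn_LIMSEQ_finite[of "total_mass w"] that by (simp add: indicator_def)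
    have "(\<lambda>n. exp (- a * psi (inverse (real (Suc n))))) \<longlonglongrightarrow> exp (- a * 0)"
      by (intro tendsto_intros psi_inverse_Suc_LIMSEQ_0)
    then show "(\<lambda>n. M.expectation (\<lambda>w. neg_exp_enn (ennreal (inverse (real (Suc n))) * total_mass w)))
        \<longlonglongrightarrow> 1"
      by (simp add: expectation_neg_exp_enn_total_mass_only)
  qed (simp_all add: abs_neg_exp_enn_le_1)
  from M.AE_prob_1[OF this] show ?thesis
    by simp
qed

lemma AE_total_mass_nonzero: "AE w in M. total_mass w \<noteq> 0"
proof -
  let ?S = "{w \<in> space M. total_mass w = 0}"
  have "M.prob ?S = 0"
  proof (rule M.prob_eq_lim_expectation)
    show "(\<lambda>n. neg_exp_enn (ennreal (real (Suc n)) * total_mass w)) \<longlonglongrightarrow> indicator ?S w"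
      if "w \<in> space M" for w
      using neg_exp_enn_LIMSEQ_zero[of "total_mass w"] that by (simp add: indicator_def)
    have "filterlim (\<lambda>n. psi (real n)) at_top sequentially"
      by (rule filterlim_compose[OF filterlim_psi_at_top filterlim_real_sequentially])
    then have "filterlim (\<lambda>n. psi (real (Suc n))) at_top sequentially"
      by (rule filterlim_sequentially_Suc[THEN iffD2])
    then have "filterlim (\<lambda>n. - (a * psi (real (Suc n)))) at_bot sequentially"
      using a_pos by (simp add: filterlim_uminus_at_bot filterlim_tendsto_pos_mult_at_top[OF tendsto_const])
    then have "(\<lambda>n. exp (- (a * psi (real (Suc n))))) \<longlonglongrightarrow> 0"
      by (rule filterlim_compose[OF exp_at_bot])
    then show "(\<lambda>n. M.expectation (\<lambda>w. neg_exp_enn (ennreal (real (Suc n)) * total_mass w))) \<longlonglongrightarrow> 0"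
      by (simp add: expectation_neg_exp_enn_total_mass_only del: of_nat_Suc)
  qed (simp_all add: abs_neg_exp_enn_le_1)
  then have "?S \<in> null_sets M"
    by (simp add: M.emeasure_eq_measure null_sets_def)
  then show ?thesis
    by (rule AE_I') auto
qed

lemma AE_T_pos: "AE w in M. T w > 0"
  using AE_total_mass_finite AE_total_mass_nonzero
  by eventually_elim (auto simp: T_def enn2real_positive_iff less_top[symmetric] zero_less_iff_neq_zero)

lemma total_mass_eq_T: "T w > 0 \<Longrightarrow> total_mass w = ennreal (T w)"
  by (cases "total_mass w") (auto simp: T_def)

lemma emeasure_eq_Y:
  assumes "w \<in> space M" "T w > 0" "A \<in> sets borel"
  shows "emeasure (\<mu> w) A = ennreal (Y A w)"
proof -
  have "emeasure (\<mu> w) A \<le> total_mass w"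
    unfolding total_mass_def using assms mu_sets[of w] by (intro emeasure_mono) auto
  then have "emeasure (\<mu> w) A < \<infinity>"
    using total_mass_eq_T[OF assms(2)] by (simp add: le_less_trans)
  then show ?thesis
    by (simp add: Y_def)
qed

lemma expectation_exp_T_Y:
  assumes A: "A \<in> sets borel" and "l \<ge> 0" "u \<ge> 0"
  shows "M.expectation (\<lambda>w. exp (- (l * T w + u * Y A w))) = joint_laplace A l u"
proof -
  have [measurable]: "Y A \<in> borel_measurable M" "(\<lambda>w. emeasure (\<mu> w) A) \<in> borel_measurable M"
    using A by (auto intro: borel_measurable_Y mu_meas)
  have "M.expectation (\<lambda>w. exp (- (l * T w + u * Y A w))) =
      M.expectation (\<lambda>w. neg_exp_enn (ennreal l * total_mass w + ennreal u * emeasure (\<mu> w) A))"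
  proof (rule integral_cong_AE)
    show "AE w in M. exp (- (l * T w + u * Y A w)) =
        neg_exp_enn (ennreal l * total_mass w + ennreal u * emeasure (\<mu> w) A)"
      using AE_T_pos AE_space
    proof eventually_elim
      case (elim w)
      then have "ennreal l * total_mass w + ennreal u * emeasure (\<mu> w) A =
          ennreal (l * T w) + ennreal (u * Y A w)"
        using assms by (simp add: emeasure_eq_Y total_mass_eq_T ennreal_mult)
      also have "\<dots> = ennreal (l * T w + u * Y A w)"
        using assms by (simp add: ennreal_plus)
      finally show ?case
        using assms by (simp add: neg_exp_enn_ennreal del: ennreal_plus)
    qed
  qed measurable
  then show ?thesis
    using expectation_neg_exp_enn_total_mass[OF assms] by simp
qed

definition Y_moment_laplace :: "'x set \<Rightarrow> real \<Rightarrow> real \<Rightarrow> real" where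
  "Y_moment_laplace A l u = a * measure H A * tau 1 (l + u) * joint_laplace A l u"

lemma DERIV_joint_laplace:
  assumes "l + u > 0"
  shows "DERIV (joint_laplace A l) u :> - Y_moment_laplace A l u"
proof -
  have shift: "DERIV (\<lambda>u. l + u) u :> 1"
    by (auto intro!: derivative_eq_intros)
  have "DERIV (\<lambda>u. psi (l + u)) u :> tau 1 (l + u) * 1"
    by (rule DERIV_chain2[OF DERIV_psi[OF assms] shift])
  then show ?thesis
    unfolding joint_laplace_def[abs_def] Y_moment_laplace_def
    by (auto intro!: derivative_eq_intros simp: joint_laplace_def algebra_simps)
qed

lemma DERIV_Y_moment_laplace:
  assumes l: "l > 0"
  shows "DERIV (Y_moment_laplace A l) 0 :>
    - (joint_laplace A l 0 * (a * measure H A * tau 2 l + (a * measure H A * tau 1 l)^2))"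
proof -
  have shift: "DERIV (\<lambda>v. l + v) 0 :> 1"
    by (auto intro!: derivative_eq_intros)
  have "DERIV (\<lambda>v. tau 1 (l + v)) 0 :> - tau (Suc 1) (l + 0) * 1"
    by (rule DERIV_chain2[OF DERIV_tau shift]) (use l in simp_all)
  moreover have "DERIV (joint_laplace A l) 0 :> - Y_moment_laplace A l 0"
    using l by (intro DERIV_joint_laplace) simp
  ultimately show ?thesis
    unfolding Y_moment_laplace_def[abs_def]
    by (auto intro!: derivative_eq_intros simp: Y_moment_laplace_def algebra_simps power2_eq_square
        numeral_2_eq_2)
qed

lemma nn_integral_Y_exp_T_Y:
  assumes A: "A \<in> sets borel" and l: "l > 0" and u: "u \<ge> 0"
  shows "(\<integral>\<^sup>+ w. ennreal (Y A w * exp (- (l * T w + u * Y A w))) \<partial>M) = ennreal (Y_moment_laplace A l u)"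
proof (rule nn_integral_eq_minus_Laplace_deriv[where \<Phi>="\<lambda>v. joint_laplace A l (u + v)"])
  have [measurable]: "Y A \<in> borel_measurable M"
    using A by (rule borel_measurable_Y)
  show "Y A \<in> borel_measurable M" "(\<lambda>w. exp (- (l * T w + u * Y A w))) \<in> borel_measurable M"
    by measurable
  show "integrable M (\<lambda>w. exp (- (l * T w + u * Y A w)))"
  proof (rule M.integrable_const_bound[where B=1])
    show "AE w in M. norm (exp (- (l * T w + u * Y A w))) \<le> 1"
    proof (intro AE_I2)
      fix w
      have "0 \<le> l * T w" "0 \<le> u * Y A w"
        using l u by simp_all
      then show "norm (exp (- (l * T w + u * Y A w))) \<le> 1"
        by simp
    qed
  qed measurable
  show "(\<integral>w. exp (- (l * T w + u * Y A w)) * exp (- v * Y A w) \<partial>M) = joint_laplace A l (u + v)"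
    if "v \<ge> 0" for v
    using expectation_exp_T_Y[OF A, of l "u + v"] l u that
    by (simp add: algebra_simps flip: exp_add)
  have shift: "DERIV (\<lambda>v. u + v) 0 :> 1"
    by (auto intro!: derivative_eq_intros)
  have "DERIV (\<lambda>v. joint_laplace A l (u + v)) 0 :> - Y_moment_laplace A l (u + 0) * 1"
    by (rule DERIV_chain2[OF DERIV_joint_laplace shift]) (use l u in simp)
  then show "DERIV (\<lambda>v. joint_laplace A l (u + v)) 0 :> - Y_moment_laplace A l u"
    by simp
qed auto

lemma nn_integral_Y_exp_T:
  assumes "A \<in> sets borel" "l > 0"
  shows "(\<integral>\<^sup>+ w. ennreal (Y A w * exp (- l * T w)) \<partial>M) =
    ennreal (a * measure H A * tau 1 l * exp (- a * psi l))"
  using nn_integral_Y_exp_T_Y[OF assms, of 0] by (simp add: Y_moment_laplace_def joint_laplace_def)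

lemma nn_integral_Y_square_exp_T:
  assumes A: "A \<in> sets borel" and l: "l > 0"
  shows "(\<integral>\<^sup>+ w. ennreal ((Y A w)^2 * exp (- l * T w)) \<partial>M) =
     ennreal (exp (- a * psi l) * ((a * measure H A * tau 1 l)^2 + a * measure H A * tau 2 l))"
proof -
  have [measurable]: "Y A \<in> borel_measurable M"
    using A by (rule borel_measurable_Y)
  have Y_moment: "integrable M (\<lambda>w. Y A w * exp (- (l * T w + v * Y A w))) \<and>
      (\<integral>w. Y A w * exp (- (l * T w + v * Y A w)) \<partial>M) = Y_moment_laplace A l v" if "v \<ge> 0" for v
  proof (subst nn_integral_eq_integrable[symmetric])
    show "0 \<le> Y_moment_laplace A l v"
      unfolding Y_moment_laplace_def joint_laplace_def using a_pos tau_nonneg[of 1 "l + v"] by simp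
  qed (use nn_integral_Y_exp_T_Y[OF A l that] in auto)
  have "(\<integral>\<^sup>+ w. ennreal (Y A w * (Y A w * exp (- (l * T w + 0 * Y A w)))) \<partial>M) =
     ennreal (joint_laplace A l 0 * (a * measure H A * tau 2 l + (a * measure H A * tau 1 l)^2))"
  proof (rule nn_integral_eq_minus_Laplace_deriv[where \<Phi>="Y_moment_laplace A l"])
    show "(\<integral>w. Y A w * exp (- (l * T w + 0 * Y A w)) * exp (- v * Y A w) \<partial>M) = Y_moment_laplace A l v"
      if "v \<ge> 0" for v
      using Y_moment[OF that] by (simp add: algebra_simps flip: exp_add)
  qed (use Y_moment[of 0] DERIV_Y_moment_laplace[OF l] in auto)
  then show ?thesis
    by (simp add: joint_laplace_def power2_eq_square algebra_simps)
qed

interpretation M_lborel: pair_sigma_finite M "lborel :: real measure"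
  by (intro pair_sigma_finite.intro M.sigma_finite_measure_axioms sigma_finite_lborel)

definition mean_factor :: ennreal where
  "mean_factor = (\<integral>\<^sup>+ l. ennreal (indicator {0<..} l * (a * tau 1 l * exp (- a * psi l))) \<partial>lborel)"

definition square_factor :: ennreal where
  "square_factor = (\<integral>\<^sup>+ l. ennreal (indicator {0<..} l * (l * exp (- a * psi l) * (a * tau 1 l)^2)) \<partial>lborel)"

lemma nn_integral_hnrmi:
  assumes A: "A \<in> sets borel"
  shows "(\<integral>\<^sup>+ w. hnrmi \<mu> w A \<partial>M) = ennreal (measure H A) * mean_factor"
proof -
  have [measurable]: "Y A \<in> borel_measurable M"
    using A by (rule borel_measurable_Y)
  have "(\<integral>\<^sup>+ w. hnrmi \<mu> w A \<partial>M) =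
      (\<integral>\<^sup>+ w. (\<integral>\<^sup>+ l. ennreal (indicator {0<..} l * (Y A w * l^0 * exp (- l * T w))) \<partial>lborel) \<partial>M)"
  proof (intro nn_integral_cong_AE)
    show "AE w in M. ennreal (hnrmi \<mu> w A) =
        (\<integral>\<^sup>+ l. ennreal (indicator {0<..} l * (Y A w * l^0 * exp (- l * T w))) \<partial>lborel)"
      using AE_T_pos AE_space
    proof eventually_elim
      case (elim w)
      then show ?case
        using nn_integral_power_times_exp[of "T w" "Y A w" 0] by (simp add: hnrmi_eq)
    qed
  qed
  also have "\<dots> = (\<integral>\<^sup>+ l. (\<integral>\<^sup>+ w. ennreal (indicator {0<..} l * (Y A w * l^0 * exp (- l * T w))) \<partial>M) \<partial>lborel)"
    by (rule M_lborel.Fubini'[symmetric]) measurable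
  also have "\<dots> = (\<integral>\<^sup>+ l. ennreal (measure H A) *
      ennreal (indicator {0<..} l * (a * tau 1 l * exp (- a * psi l))) \<partial>lborel)"
  proof (intro nn_integral_cong)
    fix l :: real
    show "(\<integral>\<^sup>+ w. ennreal (indicator {0<..} l * (Y A w * l^0 * exp (- l * T w))) \<partial>M) =
        ennreal (measure H A) * ennreal (indicator {0<..} l * (a * tau 1 l * exp (- a * psi l)))"
      using nn_integral_Y_exp_T[OF A, of l]
      by (cases "l > 0") (simp_all add: ennreal_mult'[symmetric] mult_ac)
  qed
  also have "\<dots> = ennreal (measure H A) * mean_factor"
  proof -
    have "(\<lambda>l. indicator {0<..} l * (a * tau 1 l * exp (- a * psi l))) \<in> borel_measurable borel"
      by (intro borel_measurable_indicator_times_continuous_on continuous_intros continuous_on_tau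
          continuous_on_psi) auto
    then show ?thesis
      unfolding mean_factor_def by (intro nn_integral_cmult measurable_compose[OF _ measurable_ennreal]) simp
  qed
  finally show ?thesis .
qed

lemma nn_integral_hnrmi_square_eq_integral:
  assumes A: "A \<in> sets borel"
  shows "(\<integral>\<^sup>+ w. (hnrmi \<mu> w A)^2 \<partial>M) = (\<integral>\<^sup>+ l. ennreal (indicator {0<..} l *
      (l * (exp (- a * psi l) * ((a * measure H A * tau 1 l)^2 + a * measure H A * tau 2 l)))) \<partial>lborel)"
proof -
  have [measurable]: "Y A \<in> borel_measurable M"
    using A by (rule borel_measurable_Y)
  have "(\<integral>\<^sup>+ w. (hnrmi \<mu> w A)^2 \<partial>M) =
      (\<integral>\<^sup>+ w. (\<integral>\<^sup>+ l. ennreal (indicator {0<..} l * ((Y A w)^2 * l^1 * exp (- l * T w))) \<partial>lborel) \<partial>M)"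
  proof (intro nn_integral_cong_AE)
    show "AE w in M. ennreal ((hnrmi \<mu> w A)^2) =
        (\<integral>\<^sup>+ l. ennreal (indicator {0<..} l * ((Y A w)^2 * l^1 * exp (- l * T w))) \<partial>lborel)"
      using AE_T_pos AE_space
    proof eventually_elim
      case (elim w)
      then show ?case
        using nn_integral_power_times_exp[of "T w" "(Y A w)^2" 1]
        by (simp add: hnrmi_eq power_divide power2_eq_square)
    qed
  qed
  also have "\<dots> = (\<integral>\<^sup>+ l. (\<integral>\<^sup>+ w. ennreal (indicator {0<..} l * ((Y A w)^2 * l^1 * exp (- l * T w))) \<partial>M) \<partial>lborel)"
    by (rule M_lborel.Fubini'[symmetric]) measurable
  also have "\<dots> = (\<integral>\<^sup>+ l. ennreal (indicator {0<..} l *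
      (l * (exp (- a * psi l) * ((a * measure H A * tau 1 l)^2 + a * measure H A * tau 2 l)))) \<partial>lborel)"
  proof (intro nn_integral_cong)
    fix l :: real
    have "(\<integral>\<^sup>+ w. ennreal l * ennreal ((Y A w)^2 * exp (- l * T w)) \<partial>M) =
        ennreal l * (\<integral>\<^sup>+ w. ennreal ((Y A w)^2 * exp (- l * T w)) \<partial>M)"
      by (rule nn_integral_cmult) measurable
    then show "(\<integral>\<^sup>+ w. ennreal (indicator {0<..} l * ((Y A w)^2 * l^1 * exp (- l * T w))) \<partial>M) =
        ennreal (indicator {0<..} l *
          (l * (exp (- a * psi l) * ((a * measure H A * tau 1 l)^2 + a * measure H A * tau 2 l))))"
      using nn_integral_Y_square_exp_T[OF A, of l]
      by (cases "l > 0") (simp_all add: ennreal_mult'[symmetric] mult_ac)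
  qed
  finally show ?thesis .
qed

lemma nn_integral_hnrmi_square:
  assumes A: "A \<in> sets borel"
  shows "(\<integral>\<^sup>+ w. (hnrmi \<mu> w A)^2 \<partial>M) =
    ennreal ((measure H A)^2) * square_factor + ennreal (measure H A) * ennreal (Ia \<rho> a)"
proof -
  let ?h = "measure H A"
  let ?q = "\<lambda>l. indicator {0<..} l * (l * exp (- a * psi l) * (a * tau 1 l)^2)"
  have [measurable]: "?q \<in> borel_measurable borel"
    by (intro borel_measurable_indicator_times_continuous_on continuous_intros continuous_on_tau
        continuous_on_psi) auto
  have "(\<integral>\<^sup>+ w. (hnrmi \<mu> w A)^2 \<partial>M) =
      (\<integral>\<^sup>+ l. ennreal (?h^2) * ennreal (?q l) + ennreal (?h * a) * ennreal (Ia_density a l) \<partial>lborel)"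
    unfolding nn_integral_hnrmi_square_eq_integral[OF A]
  proof (intro nn_integral_cong)
    fix l :: real
    have split: "indicator {0<..} l * (l * (exp (- a * psi l) * ((a * ?h * tau 1 l)^2 + a * ?h * tau 2 l))) =
        ?h^2 * ?q l + ?h * (a * Ia_density a l)"
      by (simp add: Ia_density_def algebra_simps power2_eq_square)
    have nonneg: "0 \<le> ?h^2 * ?q l" "0 \<le> ?h * (a * Ia_density a l)"
      using a_pos by (auto simp: Ia_density_nonneg indicator_def)
    show "ennreal (indicator {0<..} l * (l * (exp (- a * psi l) * ((a * ?h * tau 1 l)^2 + a * ?h * tau 2 l)))) =
        ennreal (?h^2) * ennreal (?q l) + ennreal (?h * a) * ennreal (Ia_density a l)"
      unfolding split ennreal_plus[OF nonneg] using a_pos by (simp add: ennreal_mult' mult.assoc)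
  qed
  also have "\<dots> = (\<integral>\<^sup>+ l. ennreal (?h^2) * ennreal (?q l) \<partial>lborel) +
      (\<integral>\<^sup>+ l. ennreal (?h * a) * ennreal (Ia_density a l) \<partial>lborel)"
    by (rule nn_integral_add) measurable
  also have "\<dots> = ennreal (?h^2) * square_factor + ennreal (?h * a) * (\<integral>\<^sup>+ l. Ia_density a l \<partial>lborel)"
  proof -
    have "(\<lambda>l. ennreal (?q l)) \<in> borel_measurable lborel" "(\<lambda>l. ennreal (Ia_density a l)) \<in> borel_measurable lborel"
      by measurable
    then show ?thesis
      unfolding square_factor_def by (simp add: nn_integral_cmult)
  qed
  finally show ?thesis
    using a_pos by (simp add: ennreal_Ia ennreal_mult' mult.assoc)
qed

lemma AE_hnrmi_UNIV: "AE w in M. hnrmi \<mu> w UNIV = 1"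
  using AE_T_pos AE_space by eventually_elim (simp add: hnrmi_eq Y_def T_def total_mass_def)

lemma mean_factor_eq_1: "mean_factor = 1"
proof -
  have "(\<integral>\<^sup>+ w. hnrmi \<mu> w UNIV \<partial>M) = (\<integral>\<^sup>+ w. 1 \<partial>M)"
    by (rule nn_integral_cong_AE) (use AE_hnrmi_UNIV in \<open>eventually_elim, simp\<close>)
  then have "(\<integral>\<^sup>+ w. hnrmi \<mu> w UNIV \<partial>M) = 1"
    by (simp add: M.emeasure_space_1)
  then show ?thesis
    using nn_integral_hnrmi[of UNIV] H.prob_space by (simp add: space_H)
qed

lemma square_factor_plus_Ia: "square_factor + ennreal (Ia \<rho> a) = 1"
proof -
  have "(\<integral>\<^sup>+ w. (hnrmi \<mu> w UNIV)^2 \<partial>M) = (\<integral>\<^sup>+ w. 1 \<partial>M)"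
    by (rule nn_integral_cong_AE) (use AE_hnrmi_UNIV in \<open>eventually_elim, simp\<close>)
  then have "(\<integral>\<^sup>+ w. (hnrmi \<mu> w UNIV)^2 \<partial>M) = 1"
    by (simp add: M.emeasure_space_1)
  then show ?thesis
    using nn_integral_hnrmi_square[of UNIV] H.prob_space by (simp add: space_H)
qed

lemma Ia_le_1: "Ia \<rho> a \<le> 1" and square_factor_eq: "square_factor = ennreal (1 - Ia \<rho> a)"
proof -
  have "ennreal (Ia \<rho> a) \<le> square_factor + ennreal (Ia \<rho> a)"
    by simp
  then show "Ia \<rho> a \<le> 1"
    unfolding square_factor_plus_Ia by (simp add: ennreal_le_1)
  have "square_factor = (square_factor + ennreal (Ia \<rho> a)) - ennreal (Ia \<rho> a)"
    by (simp add: ennreal_add_diff_cancel_right)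
  also have "\<dots> = ennreal (1 - Ia \<rho> a)"
    unfolding square_factor_plus_Ia using Ia_nonneg[of a] a_pos
    by (subst ennreal_1[symmetric], subst ennreal_minus) auto
  finally show "square_factor = ennreal (1 - Ia \<rho> a)" .
qed

lemma expectation_and_variance_hnrmi:
  assumes A: "A \<in> sets borel"
  shows "M.expectation (\<lambda>w. hnrmi \<mu> w A) = measure H A"
    and "M.variance (\<lambda>w. hnrmi \<mu> w A) = measure H A * (1 - measure H A) * Ia \<rho> a"
proof -
  let ?h = "measure H A" and ?i = "Ia \<rho> a"
  have [measurable]: "(\<lambda>w. hnrmi \<mu> w A) \<in> borel_measurable M"
    using A by (rule borel_measurable_hnrmi)
  have hnrmi_nonneg: "AE w in M. 0 \<le> hnrmi \<mu> w A"
    by (simp add: hnrmi_def)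
  have first: "integrable M (\<lambda>w. hnrmi \<mu> w A) \<and> M.expectation (\<lambda>w. hnrmi \<mu> w A) = ?h"
    using nn_integral_hnrmi[OF A] mean_factor_eq_1 hnrmi_nonneg
    by (subst nn_integral_eq_integrable[symmetric]) auto
  have "(\<integral>\<^sup>+ w. (hnrmi \<mu> w A)^2 \<partial>M) = ennreal (?h^2 * (1 - ?i) + ?h * ?i)"
    using nn_integral_hnrmi_square[OF A] Ia_le_1 Ia_nonneg[of a] a_pos
    by (simp add: square_factor_eq ennreal_mult[symmetric] ennreal_plus[symmetric] del: ennreal_plus)
  then have second: "integrable M (\<lambda>w. (hnrmi \<mu> w A)^2) \<and>
      M.expectation (\<lambda>w. (hnrmi \<mu> w A)^2) = ?h^2 * (1 - ?i) + ?h * ?i"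
    using Ia_le_1 Ia_nonneg[of a] a_pos
    by (subst nn_integral_eq_integrable[symmetric]) auto
  show "M.expectation (\<lambda>w. hnrmi \<mu> w A) = ?h"
    using first ..
  have "M.variance (\<lambda>w. hnrmi \<mu> w A) = ?h^2 * (1 - ?i) + ?h * ?i - ?h^2"
    using M.variance_eq[of "\<lambda>w. hnrmi \<mu> w A"] first second by simp
  also have "\<dots> = ?h * (1 - ?h) * ?i"
    by (simp add: algebra_simps power2_eq_square)
  finally show "M.variance (\<lambda>w. hnrmi \<mu> w A) = ?h * (1 - ?h) * ?i" .
qed

end

theorem proposition2:
  fixes \<rho> :: "real measure" and H :: "'x::polish_space measure" and a :: real
    and M :: "'w measure" and \<mu> :: "'w \<Rightarrow> 'x measure"
  assumes rho_sets: "sets \<rho> = sets borel"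
    and rho_support: "emeasure \<rho> {..0} = 0"
    and rho_levy: "(\<integral>\<^sup>+ s. ennreal (min s 1) \<partial>\<rho>) < \<infinity>"
    and rho_infinite: "emeasure \<rho> {0<..} = \<infinity>"
    and tau2: "(\<integral>\<^sup>+ s. ennreal (indicator {1..} s * s\<^sup>2) \<partial>\<rho>) < \<infinity>"
    and H_prob: "prob_space H" and H_sets: "sets H = sets borel"
    and H_nonatomic: "\<And>x. emeasure H {x} = 0"
    and a_pos: "a > 0"
    and M_prob: "prob_space M"
    and mu_sets: "\<And>w. w \<in> space M \<Longrightarrow> sets (\<mu> w) = sets borel"
    and mu_meas: "\<And>A. A \<in> sets borel \<Longrightarrow> (\<lambda>w. emeasure (\<mu> w) A) \<in> borel_measurable M"
    and mu_laplace: "\<And>(h :: 'x \<Rightarrow> real) A. h \<in> borel_measurable borel \<Longrightarrow> (\<forall>x. h x \<ge> 0)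
        \<Longrightarrow> bounded (range h) \<Longrightarrow> A \<in> sets borel \<Longrightarrow>
        prob_space.expectation M (\<lambda>w. neg_exp_enn (\<integral>\<^sup>+ x. ennreal (indicator A x * h x) \<partial>(\<mu> w)))
        = exp (- a * (\<integral>x. indicator A x * (\<integral>s. 1 - exp (- s * h x) \<partial>\<rho>) \<partial>H))"
  shows "(\<forall>A \<in> sets borel.
            prob_space.expectation M (\<lambda>w. hnrmi \<mu> w A) = measure H A \<and>
            prob_space.variance M (\<lambda>w. hnrmi \<mu> w A) = measure H A * (1 - measure H A) * Ia \<rho> a)
       \<and> (\<forall>b>0. set_integrable lborel {0<..} (Ia_integrand \<rho> b))
       \<and> (\<lambda>b. Ia \<rho> b) \<in> O[at_top](\<lambda>b. 1 / b)"
proof -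
  interpret homogeneous_crm \<rho> H a M \<mu>
    by (intro homogeneous_crm.intro levy_intensity.intro homogeneous_crm_axioms.intro assms)
  show ?thesis
    using expectation_and_variance_hnrmi set_integrable_Ia_integrand Ia_bigo by auto
qed

end
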